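(* Let $G$ be a distance-regular graph of diameter $d$ admitting a distance magic labeling $l$. If $D$ is a non-empty subset of $\{0,1,\dots,d\}$, then $l$ is either a $D$-magic labeling or an $(\alpha,\delta)$-$D$-antimagic labeling of $G$ for some $\alpha,\delta$. Moreover, if $G$ is bipartite, then $l$ is a $D$-magic labeling for every non-empty $D\subseteq\{1,3,5,\dots\}$.
   Context: A connected graph $G$ of diameter $d$ is distance-regular if there are non-negative integers $b_i,c_i$ ($0\le i\le d$) such that for any two vertices $x,y$ at distance $i$, $y$ has exactly $c_i$ neighbours at distance $i-1$ from $x$ and exactly $b_i$ neighbours at distance $i+1$ from $x$. $G_i(x)$ is the set of vertices at distance $i$ from $x$, and for a set of distances $D$, $N_D(x)=\bigcup_{i\in D}G_i(x)$. For $G$ of order $N$ and a bijection $f:V(G)\to\{1,\dots,N\}$, the weight of $x$ is $w(x)=\sum_{y\in N_D(x)}f(y)$. $f$ is $D$-magic if $w(x)$ is constant; it is $(\alpha,\delta)$-$D$-antimagic if the weights are pairwise distinct and the set $\{w(x):x\in V(G)\}$ is an arithmetic progression starting at $\alpha$ with common difference $\delta>0$. A distance magic labeling is a $\{1\}$-magic labeling. *)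

theory Defs
  imports Main
begin

definition simple_graph :: "'a set \<Rightarrow> ('a \<Rightarrow> 'a \<Rightarrow> bool) \<Rightarrow> bool" where
  "simple_graph V E \<longleftrightarrow> finite V \<and> V \<noteq> {} \<and>
     (\<forall>x y. E x y \<longrightarrow> x \<in> V \<and> y \<in> V) \<and>
     (\<forall>x y. E x y \<longrightarrow> E y x) \<and> (\<forall>x. \<not> E x x)"

definition walk :: "'a set \<Rightarrow> ('a \<Rightarrow> 'a \<Rightarrow> bool) \<Rightarrow> 'a list \<Rightarrow> bool" where
  "walk V E xs \<longleftrightarrow> xs \<noteq> [] \<and> set xs \<subseteq> V \<and>
     (\<forall>i. Suc i < length xs \<longrightarrow> E (xs ! i) (xs ! Suc i))"

definition connected_graph :: "'a set \<Rightarrow> ('a \<Rightarrow> 'a \<Rightarrow> bool) \<Rightarrow> bool" where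
  "connected_graph V E \<longleftrightarrow> simple_graph V E \<and>
     (\<forall>x\<in>V. \<forall>y\<in>V. \<exists>xs. walk V E xs \<and> hd xs = x \<and> last xs = y)"

definition gdist :: "'a set \<Rightarrow> ('a \<Rightarrow> 'a \<Rightarrow> bool) \<Rightarrow> 'a \<Rightarrow> 'a \<Rightarrow> nat" where
  "gdist V E x y = (LEAST n. \<exists>xs. walk V E xs \<and> hd xs = x \<and> last xs = y \<and> length xs = Suc n)"

definition diameter :: "'a set \<Rightarrow> ('a \<Rightarrow> 'a \<Rightarrow> bool) \<Rightarrow> nat" where
  "diameter V E = Max {gdist V E x y | x y. x \<in> V \<and> y \<in> V}"

definition distance_regular :: "'a set \<Rightarrow> ('a \<Rightarrow> 'a \<Rightarrow> bool) \<Rightarrow> nat \<Rightarrow> bool" where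
  "distance_regular V E d \<longleftrightarrow> connected_graph V E \<and> diameter V E = d \<and>
     (\<exists>b c :: nat \<Rightarrow> nat. \<forall>i\<le>d. \<forall>x\<in>V. \<forall>y\<in>V. gdist V E x y = i \<longrightarrow>
        card {z\<in>V. E y z \<and> gdist V E x z + 1 = i} = c i \<and>
        card {z\<in>V. E y z \<and> gdist V E x z = i + 1} = b i)"

definition bipartite :: "'a set \<Rightarrow> ('a \<Rightarrow> 'a \<Rightarrow> bool) \<Rightarrow> bool" where
  "bipartite V E \<longleftrightarrow> (\<exists>A\<subseteq>V. \<forall>x y. E x y \<longrightarrow> (x \<in> A \<longleftrightarrow> y \<notin> A))"

definition distN :: "'a set \<Rightarrow> ('a \<Rightarrow> 'a \<Rightarrow> bool) \<Rightarrow> nat set \<Rightarrow> 'a \<Rightarrow> 'a set" where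
  "distN V E D x = {y\<in>V. gdist V E x y \<in> D}"

definition lweight :: "'a set \<Rightarrow> ('a \<Rightarrow> 'a \<Rightarrow> bool) \<Rightarrow> nat set \<Rightarrow> ('a \<Rightarrow> nat) \<Rightarrow> 'a \<Rightarrow> nat" where
  "lweight V E D f x = (\<Sum>y\<in>distN V E D x. f y)"

definition labeling :: "'a set \<Rightarrow> ('a \<Rightarrow> nat) \<Rightarrow> bool" where
  "labeling V f \<longleftrightarrow> bij_betw f V {1..card V}"

definition D_magic :: "'a set \<Rightarrow> ('a \<Rightarrow> 'a \<Rightarrow> bool) \<Rightarrow> nat set \<Rightarrow> ('a \<Rightarrow> nat) \<Rightarrow> bool" where
  "D_magic V E D f \<longleftrightarrow> labeling V f \<and> (\<exists>k. \<forall>x\<in>V. lweight V E D f x = k)"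

definition D_antimagic :: "'a set \<Rightarrow> ('a \<Rightarrow> 'a \<Rightarrow> bool) \<Rightarrow> nat set \<Rightarrow> ('a \<Rightarrow> nat) \<Rightarrow> nat \<Rightarrow> nat \<Rightarrow> bool" where
  "D_antimagic V E D f \<alpha> \<delta> \<longleftrightarrow> labeling V f \<and> \<delta> > 0 \<and>
     inj_on (lweight V E D f) V \<and>
     lweight V E D f ` V = {\<alpha> + j * \<delta> | j. j < card V}"

definition distance_magic :: "'a set \<Rightarrow> ('a \<Rightarrow> 'a \<Rightarrow> bool) \<Rightarrow> ('a \<Rightarrow> nat) \<Rightarrow> bool" where
  "distance_magic V E f \<longleftrightarrow> D_magic V E {1} f"

end

theory Submission
  imports Defs Complex_Main
begin

text \<open>Write A_i for the distance-i operator (A_i g)(x) = sum of g(y) over all y with d(x,y) = i.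
In a distance-regular graph A_1 A_i = b_(i-1) A_(i-1) + a_i A_i + c_(i+1) A_(i+1), so every
eigenvector of A_1 is an eigenvector of every A_i. A distance magic labeling l satisfies
A_1 l = k, and since A_1 1 = b_0 and the labels sum to N(N+1)/2, the centred labeling
l - (N+1)/2 lies in the kernel of A_1. Hence the D-weight, the sum of A_i l over i \<in> D, is an
affine function \<Theta> l(x) + C of the label: constant if \<Theta> = 0, and an arithmetic progression
with difference |\<Theta>| otherwise. In a bipartite graph every a_i vanishes, and the recurrence then
forces A_i to vanish on the kernel of A_1 for odd i, so \<Theta> = 0 when D consists of odd
distances.\<close>

lemma walk_singleton: "x \<in> V \<Longrightarrow> walk V E [x]"
  by (simp add: walk_def)

lemma walk_take: "walk V E xs \<Longrightarrow> 0 < n \<Longrightarrow> walk V E (take n xs)"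
  unfolding walk_def by (auto dest: in_set_takeD)

lemma walk_snoc:
  assumes "simple_graph V E" "walk V E xs" "E (last xs) z"
  shows "walk V E (xs @ [z])"
proof -
  have "z \<in> V" "xs \<noteq> []" using assms unfolding simple_graph_def walk_def by blast+
  moreover have "E ((xs @ [z]) ! i) ((xs @ [z]) ! Suc i)" if "Suc i < length (xs @ [z])" for i
  proof (cases "Suc i < length xs")
    case True
    then show ?thesis using assms(2) unfolding walk_def by (simp add: nth_append)
  next
    case False
    then have "i = length xs - 1" using that by simp
    then show ?thesis using assms(3) \<open>xs \<noteq> []\<close> by (simp add: nth_append last_conv_nth)
  qed
  ultimately show ?thesis using assms(2) unfolding walk_def by auto
qed

lemma walk_rev:
  assumes "simple_graph V E" "walk V E xs"
  shows "walk V E (rev xs)"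
  unfolding walk_def
proof (intro conjI allI impI)
  show "rev xs \<noteq> []" "set (rev xs) \<subseteq> V" using assms(2) unfolding walk_def by auto
next
  fix i assume i: "Suc i < length (rev xs)"
  have "E (xs ! (length xs - Suc (Suc i))) (xs ! Suc (length xs - Suc (Suc i)))"
    using assms(2) i unfolding walk_def by auto
  moreover have "Suc (length xs - Suc (Suc i)) = length xs - Suc i" using i by simp
  ultimately have "E (xs ! (length xs - Suc (Suc i))) (xs ! (length xs - Suc i))" by simp
  then show "E (rev xs ! i) (rev xs ! Suc i)"
    using assms(1) i unfolding simple_graph_def by (simp add: rev_nth)
qed

lemma gdist_le_length:
  assumes "walk V E xs" "hd xs = x" "last xs = y"
  shows "gdist V E x y \<le> length xs - 1"
proof -
  have "length xs = Suc (length xs - 1)" using assms(1) unfolding walk_def by auto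
  then show ?thesis unfolding gdist_def using assms by (intro Least_le) metis
qed

lemma walk_nth_parity:
  assumes "walk V E xs" "\<forall>x y. E x y \<longrightarrow> (x \<in> A \<longleftrightarrow> y \<notin> A)" "i < length xs"
  shows "(xs ! i \<in> A \<longleftrightarrow> xs ! 0 \<in> A) \<longleftrightarrow> even i"
  using assms(3)
proof (induction i)
  case (Suc i)
  then have "E (xs ! i) (xs ! Suc i)" using assms(1) unfolding walk_def by blast
  then show ?case using Suc assms(2) by auto
qed simp

definition distance_op :: "'a set \<Rightarrow> ('a \<Rightarrow> 'a \<Rightarrow> bool) \<Rightarrow> nat \<Rightarrow> ('a \<Rightarrow> real) \<Rightarrow> 'a \<Rightarrow> real" where
  "distance_op V E i g x = (\<Sum>y\<in>distN V E {i} x. g y)"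

lemma distance_op_scale:
  "(\<And>y. y \<in> V \<Longrightarrow> h y = a * g y) \<Longrightarrow> distance_op V E i h x = a * distance_op V E i g x"
  unfolding distance_op_def distN_def by (simp add: sum_distrib_left)

lemma distance_op_add_const:
  "distance_op V E i (\<lambda>y. g y + m) x = distance_op V E i g x + m * distance_op V E i (\<lambda>_. 1) x"
  unfolding distance_op_def by (simp add: sum.distrib)

lemma lweight_eq_sum_distance_op:
  assumes "finite V" "finite D"
  shows "real (lweight V E D f x) = (\<Sum>i\<in>D. distance_op V E i (\<lambda>y. real (f y)) x)"
proof -
  have "distN V E D x = (\<Union>i\<in>D. distN V E {i} x)" unfolding distN_def by auto
  moreover have "finite (distN V E {i} x)" for i using assms(1) unfolding distN_def by simp
  moreover have "distN V E {i} x \<inter> distN V E {j} x = {}" if "i \<noteq> j" for i j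
    using that unfolding distN_def by auto
  ultimately show ?thesis
    unfolding lweight_def distance_op_def by (simp add: sum.UNION_disjoint[OF assms(2)])
qed

lemma sum_mult_indicator:
  "finite A \<Longrightarrow> (\<Sum>y\<in>A. g y * real (if P y then k else 0)) = real k * (\<Sum>y\<in>{y\<in>A. P y}. g y)"
  by (simp add: sum.inter_filter sum_distrib_left mult.commute if_distrib cong: if_cong)

lemma sum_labels:
  assumes "labeling V f"
  shows "(\<Sum>x\<in>V. real (f x)) = real (card V) * (real (card V) + 1) / 2"
proof -
  have "(\<Sum>x\<in>V. real (f x)) = (\<Sum>j = Suc 0..card V. real j)"
    using sum.reindex_bij_betw[OF assms[unfolded labeling_def], of real] by simp
  then show ?thesis using double_gauss_sum_from_Suc_0[of "card V", where 'a = real] by simp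
qed

lemma bij_betw_reflect_atLeastAtMost: "bij_betw (\<lambda>j. Suc N - j) {1..N} {1..N}"
  by (rule bij_betw_byWitness[where f' = "\<lambda>j. Suc N - j"]) auto

lemma progression_if_affine_pos:
  fixes w f :: "'a \<Rightarrow> nat"
  assumes f: "bij_betw f V {1..N}" and N: "2 \<le> N" and pos: "0 < \<Theta>"
    and aff: "\<forall>x\<in>V. real (w x) = \<Theta> * real (f x) + C"
  shows "\<exists>\<alpha> \<delta>. 0 < \<delta> \<and> inj_on w V \<and> w ` V = {\<alpha> + j * \<delta> | j. j < N}"
proof -
  have im: "f ` V = {1..N}" using f by (simp add: bij_betw_def)
  moreover have "1 \<in> {1..N}" "2 \<in> {1..N}" using N by auto
  ultimately obtain x1 x2 where x: "x1 \<in> V" "f x1 = 1" "x2 \<in> V" "f x2 = 2"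
    by (metis imageE)
  define \<delta> where "\<delta> = w x2 - w x1"
  have "real (w x2) - real (w x1) = \<Theta>" using aff x by (simp add: algebra_simps)
  then have \<delta>: "real \<delta> = \<Theta>" "0 < \<delta>" using pos unfolding \<delta>_def by (simp_all add: of_nat_diff)
  have f_ge_1: "1 \<le> f x" if "x \<in> V" for x using im that by auto
  have w: "w x = w x1 + (f x - 1) * \<delta>" if "x \<in> V" for x
  proof -
    have "real (w x) = real (w x1) + (real (f x) - 1) * \<Theta>"
      using aff x that by (simp add: algebra_simps)
    also have "\<dots> = real (w x1 + (f x - 1) * \<delta>)"
      using \<delta>(1) f_ge_1[OF that] by (simp add: of_nat_diff)
    finally show ?thesis by (simp only: of_nat_eq_iff)
  qed
  have "inj_on w V"
  proof (rule inj_onI)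
    fix x y assume "x \<in> V" "y \<in> V" "w x = w y"
    then have "f x = f y"
      using w \<delta>(2) f_ge_1 by (metis add_left_cancel le_add_diff_inverse mult_right_cancel not_gr0)
    then show "x = y" using f \<open>x \<in> V\<close> \<open>y \<in> V\<close> by (auto simp: bij_betw_def inj_on_def)
  qed
  moreover have "w ` V = (\<lambda>j. w x1 + (j - 1) * \<delta>) ` Suc ` {..<N}"
    unfolding image_Suc_lessThan im[symmetric] image_image using w by (auto intro: image_cong)
  then have "w ` V = (\<lambda>j. w x1 + j * \<delta>) ` {..<N}" by (simp add: image_image)
  then have "w ` V = {w x1 + j * \<delta> | j. j < N}" by blast
  ultimately show ?thesis using \<delta>(2) by blast
qed

lemma constant_or_progression_if_affine:
  fixes w f :: "'a \<Rightarrow> nat"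
  assumes f: "bij_betw f V {1..N}" and aff: "\<forall>x\<in>V. real (w x) = \<Theta> * real (f x) + C"
  shows "(\<forall>x\<in>V. \<forall>y\<in>V. w x = w y) \<or> (\<exists>\<alpha> \<delta>. 0 < \<delta> \<and> inj_on w V \<and> w ` V = {\<alpha> + j * \<delta> | j. j < N})"
proof -
  consider "N < 2" | "\<Theta> = 0" | "2 \<le> N" "0 < \<Theta>" | "2 \<le> N" "\<Theta> < 0" by linarith
  then show ?thesis
  proof cases
    case 1
    have "finite V" "card V = N" using f by (auto simp: bij_betw_finite bij_betw_same_card)
    have const: "w x = w y" if "x \<in> V" "y \<in> V" for x y
    proof -
      have "x = y" using 1 card_le_Suc0_iff_eq[of V] that \<open>finite V\<close> \<open>card V = N\<close> by simp
      then show ?thesis by simp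
    qed
    show ?thesis using const by (intro disjI1 ballI) blast
  next
    case 2
    have const: "w x = w y" if "x \<in> V" "y \<in> V" for x y
    proof -
      have "real (w x) = real (w y)" using aff that 2 by simp
      then show ?thesis by simp
    qed
    show ?thesis using const by (intro disjI1 ballI) blast
  next
    case 3
    show ?thesis using progression_if_affine_pos[OF f 3 aff] by (rule disjI2)
  next
    case 4
    have f': "bij_betw (\<lambda>x. Suc N - f x) V {1..N}"
      using bij_betw_trans[OF f bij_betw_reflect_atLeastAtMost] by (simp add: comp_def)
    have "real (w x) = - \<Theta> * real (Suc N - f x) + (C + \<Theta> * (real N + 1))" if x: "x \<in> V" for x
    proof -
      have "f x \<le> N" using f x by (auto simp: bij_betw_def)
      then have "real (Suc N - f x) = real N + 1 - real (f x)" by (simp add: of_nat_diff)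
      then show ?thesis using aff x by (simp add: algebra_simps)
    qed
    moreover have "0 < - \<Theta>" using 4(2) by simp
    ultimately show ?thesis using progression_if_affine_pos[OF f' 4(1)] by (intro disjI2) blast
  qed
qed

lemma D_magic_iff_weights_equal:
  "labeling V f \<Longrightarrow> D_magic V E D f \<longleftrightarrow> (\<forall>x\<in>V. \<forall>y\<in>V. lweight V E D f x = lweight V E D f y)"
  unfolding D_magic_def by (cases "V = {}") auto

lemma magic_or_antimagic_if_affine:
  assumes "labeling V f" "\<forall>x\<in>V. real (lweight V E D f x) = \<Theta> * real (f x) + C"
  shows "D_magic V E D f \<or> (\<exists>\<alpha> \<delta>. D_antimagic V E D f \<alpha> \<delta>)"
proof -
  note weights = constant_or_progression_if_affine[OF assms(1)[unfolded labeling_def] assms(2)]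
  show ?thesis
  proof (cases "\<forall>x\<in>V. \<forall>y\<in>V. lweight V E D f x = lweight V E D f y")
    case True
    then show ?thesis using D_magic_iff_weights_equal[OF assms(1)] by blast
  next
    case False
    then obtain \<alpha> \<delta> where "0 < \<delta>" "inj_on (lweight V E D f) V"
      "lweight V E D f ` V = {\<alpha> + j * \<delta> | j. j < card V}"
      using weights by blast
    then show ?thesis using assms(1) unfolding D_antimagic_def by blast
  qed
qed

locale conn_graph =
  fixes V :: "'a set" and E :: "'a \<Rightarrow> 'a \<Rightarrow> bool"
  assumes connected: "connected_graph V E"
begin

abbreviation dist :: "'a \<Rightarrow> 'a \<Rightarrow> nat" where "dist \<equiv> gdist V E"

lemma simple: "simple_graph V E"
  using connected unfolding connected_graph_def by blast

lemma finite_V: "finite V" and V_nonempty: "V \<noteq> {}"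
  using simple unfolding simple_graph_def by blast+

lemma adjacent_in_V: "E x y \<Longrightarrow> x \<in> V \<and> y \<in> V"
  and adjacent_sym: "E x y \<Longrightarrow> E y x"
  and adjacent_irrefl: "\<not> E x x"
  using simple unfolding simple_graph_def by blast+

lemma shortest_walk_exists:
  assumes "x \<in> V" "y \<in> V"
  shows "\<exists>xs. walk V E xs \<and> hd xs = x \<and> last xs = y \<and> length xs = Suc (dist x y)"
proof -
  obtain xs where xs: "walk V E xs" "hd xs = x" "last xs = y"
    using assms connected unfolding connected_graph_def by blast
  then have "length xs = Suc (length xs - 1)" unfolding walk_def by auto
  with xs have "\<exists>n xs. walk V E xs \<and> hd xs = x \<and> last xs = y \<and> length xs = Suc n"
    by blast
  then show ?thesis unfolding gdist_def by (rule LeastI_ex)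
qed

lemma dist_self: "x \<in> V \<Longrightarrow> dist x x = 0"
  using gdist_le_length[of V E "[x]" x x] walk_singleton[of x V E] by simp

lemma dist_eq_0_iff:
  assumes "x \<in> V" "y \<in> V"
  shows "dist x y = 0 \<longleftrightarrow> x = y"
proof
  assume "dist x y = 0"
  then obtain xs where "walk V E xs" "hd xs = x" "last xs = y" "length xs = 1"
    using shortest_walk_exists[OF assms] by auto
  then show "x = y" by (cases xs) auto
qed (use assms dist_self in simp)

lemma dist_commute:
  assumes "x \<in> V" "y \<in> V"
  shows "dist x y = dist y x"
proof -
  have "dist u w \<le> dist w u" if uw: "u \<in> V" "w \<in> V" for u w
  proof -
    obtain xs where xs: "walk V E xs" "hd xs = w" "last xs = u" "length xs = Suc (dist w u)"
      using shortest_walk_exists[OF uw(2,1)] by blast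
    then have "hd (rev xs) = u" "last (rev xs) = w"
      by (auto simp: hd_rev last_rev)
    then show ?thesis using gdist_le_length[OF walk_rev[OF simple xs(1)]] xs(4) by simp
  qed
  then show ?thesis using assms by (simp add: le_antisym)
qed

lemma dist_adjacent_le:
  assumes "x \<in> V" "y \<in> V" "E y z"
  shows "dist x z \<le> dist x y + 1"
proof -
  obtain xs where xs: "walk V E xs" "hd xs = x" "last xs = y" "length xs = Suc (dist x y)"
    using shortest_walk_exists[OF assms(1,2)] by blast
  have "walk V E (xs @ [z])" using walk_snoc[OF simple xs(1)] xs(3) assms(3) by simp
  moreover have "xs \<noteq> []" using xs(4) by auto
  ultimately show ?thesis using gdist_le_length[of V E "xs @ [z]" x z] xs by simp
qed

lemma dist_eq_1_iff:
  assumes "x \<in> V" "y \<in> V"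
  shows "dist x y = 1 \<longleftrightarrow> E x y"
proof
  assume "E x y"
  then have "dist x y \<le> 1" "x \<noteq> y"
    using dist_adjacent_le[OF assms(1,1)] dist_self[OF assms(1)] adjacent_irrefl by auto
  then show "dist x y = 1" using dist_eq_0_iff[OF assms] by linarith
next
  assume d: "dist x y = 1"
  obtain xs where xs: "walk V E xs" "hd xs = x" "last xs = y" "length xs = 2"
    using shortest_walk_exists[OF assms] d by auto
  moreover have "xs \<noteq> []" using xs(4) by auto
  ultimately have "xs ! 0 = x" "xs ! 1 = y" by (auto simp: hd_conv_nth last_conv_nth)
  moreover have "E (xs ! 0) (xs ! 1)" using xs(1,4) unfolding walk_def by auto
  ultimately show "E x y" by simp
qed

lemma dist_Suc_predecessor:
  assumes "x \<in> V" "y \<in> V" "dist x y = Suc n"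
  shows "\<exists>z\<in>V. E y z \<and> dist x z = n"
proof -
  obtain xs where xs: "walk V E xs" "hd xs = x" "last xs = y" "length xs = Suc (Suc n)"
    using shortest_walk_exists[OF assms(1,2)] assms(3) by auto
  define z where "z = xs ! n"
  have "E z (xs ! Suc n)" using xs(1,4) unfolding walk_def z_def by auto
  moreover have "xs ! Suc n = y"
    using xs(3,4) last_conv_nth[of xs] by (metis Zero_not_Suc diff_Suc_1 list.size(3))
  ultimately have zy: "E z y" and z: "z \<in> V" using adjacent_in_V by auto
  have "take (Suc n) xs \<noteq> []" "hd (take (Suc n) xs) = x" using xs(2,4) by auto
  moreover have "last (take (Suc n) xs) = z" using xs(4) by (simp add: z_def take_Suc_conv_app_nth)
  ultimately
  have "dist x z \<le> n"
    using gdist_le_length[OF walk_take[OF xs(1)], of "Suc n"] xs(4) by simp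
  moreover have "Suc n \<le> dist x z + 1" using dist_adjacent_le[OF assms(1) z zy] assms(3) by simp
  ultimately show ?thesis using z adjacent_sym[OF zy] by (intro bexI[of _ z]) auto
qed

lemma dist_le_diameter:
  assumes "x \<in> V" "y \<in> V"
  shows "dist x y \<le> diameter V E"
proof -
  have "{dist x y | x y. x \<in> V \<and> y \<in> V} = (\<lambda>(x, y). dist x y) ` (V \<times> V)" by auto
  then have "finite {dist x y | x y. x \<in> V \<and> y \<in> V}" using finite_V by simp
  then show ?thesis unfolding diameter_def using assms by (intro Max_ge) auto
qed

lemma bipartite_dist_adjacent_neq:
  assumes "bipartite V E" "x \<in> V" "E y z"
  shows "dist x y \<noteq> dist x z"
proof -
  obtain A where A: "\<forall>x y. E x y \<longrightarrow> (x \<in> A \<longleftrightarrow> y \<notin> A)"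
    using assms(1) unfolding bipartite_def by blast
  have parity: "(w \<in> A \<longleftrightarrow> x \<in> A) \<longleftrightarrow> even (dist x w)" if w: "w \<in> V" for w
  proof -
    obtain xs where xs: "walk V E xs" "hd xs = x" "last xs = w" "length xs = Suc (dist x w)"
      using shortest_walk_exists[OF assms(2) w] by blast
    moreover have "xs \<noteq> []" using xs(4) by auto
    ultimately have "xs ! dist x w = w" "xs ! 0 = x"
      by (auto simp: last_conv_nth hd_conv_nth)
    then show ?thesis using walk_nth_parity[OF xs(1) A, of "dist x w"] xs(4) by simp
  qed
  have "y \<in> A \<longleftrightarrow> z \<notin> A" using A assms(3) by blast
  moreover have "y \<in> V" "z \<in> V" using adjacent_in_V[OF assms(3)] by auto
  ultimately show ?thesis using parity[of y] parity[of z] by auto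
qed

lemma distN_1: "x \<in> V \<Longrightarrow> distN V E {1} x = {y \<in> V. E x y}"
  unfolding distN_def using dist_eq_1_iff by auto

lemma distance_op_0: "x \<in> V \<Longrightarrow> distance_op V E 0 g x = g x"
proof -
  assume x: "x \<in> V"
  then have "distN V E {0} x = {x}" unfolding distN_def using dist_eq_0_iff by auto
  then show ?thesis unfolding distance_op_def by simp
qed

lemma distN_inter_diameter: "x \<in> V \<Longrightarrow> distN V E D x = distN V E (D \<inter> {..diameter V E}) x"
  unfolding distN_def using dist_le_diameter by auto

lemma sum_distance_op:
  "(\<Sum>x\<in>V. distance_op V E i g x) = (\<Sum>y\<in>V. g y * distance_op V E i (\<lambda>_. 1) y)"
proof -
  have "(\<Sum>x\<in>V. distance_op V E i g x) = (\<Sum>x\<in>V. \<Sum>y\<in>V. if dist x y = i then g y else 0)"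
    unfolding distance_op_def distN_def using finite_V by (simp add: sum.inter_filter)
  also have "\<dots> = (\<Sum>y\<in>V. \<Sum>x\<in>V. if dist y x = i then g y else 0)"
    by (subst sum.swap) (intro sum.cong refl, simp add: dist_commute)
  also have "\<dots> = (\<Sum>y\<in>V. g y * distance_op V E i (\<lambda>_. 1) y)"
    unfolding distance_op_def distN_def using finite_V
    by (simp add: sum.inter_filter[symmetric] mult.commute)
  finally show ?thesis .
qed

end

locale distance_regular_graph = conn_graph +
  fixes d :: nat and b c :: "nat \<Rightarrow> nat"
  assumes diameter_eq: "diameter V E = d"
    and intersection_numbers: "\<forall>i\<le>d. \<forall>x\<in>V. \<forall>y\<in>V. gdist V E x y = i \<longrightarrow>
        card {z\<in>V. E y z \<and> gdist V E x z + 1 = i} = c i \<and>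
        card {z\<in>V. E y z \<and> gdist V E x z = i + 1} = b i"
begin

abbreviation a :: "nat \<Rightarrow> nat" where "a i \<equiv> b 0 - b i - c i"

lemma degree:
  assumes x: "x \<in> V"
  shows "card {z\<in>V. E x z} = b 0"
proof -
  have "card {z\<in>V. E x z \<and> dist x z = 0 + 1} = b 0"
    using intersection_numbers x dist_self[OF x] by blast
  moreover have "{z\<in>V. E x z \<and> dist x z = 0 + 1} = {z\<in>V. E x z}"
    using dist_eq_1_iff[OF x] by auto
  ultimately show ?thesis by simp
qed

lemma card_neighbours_at_dist:
  assumes x: "x \<in> V" and y: "y \<in> V"
  shows "card {z\<in>V. E x z \<and> dist y z = i} =
    (if dist x y = i + 1 then c (i + 1) else 0) + (if dist x y + 1 = i then b (i - 1) else 0)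
      + (if dist x y = i then a i else 0)"
proof -
  define j where "j = dist y x"
  have j: "j = dist x y" using dist_commute[OF x y] j_def by simp
  have "j \<le> d" using dist_le_diameter[OF y x] diameter_eq j_def by simp
  then have c: "card {z\<in>V. E x z \<and> dist y z + 1 = j} = c j"
    and b: "card {z\<in>V. E x z \<and> dist y z = j + 1} = b j"
    using intersection_numbers x y j_def by auto
  have near: "dist y z + 1 = j \<or> dist y z = j \<or> dist y z = j + 1" if "z \<in> V" "E x z" for z
    using dist_adjacent_le[OF y x that(2)] dist_adjacent_le[OF y that(1) adjacent_sym[OF that(2)]]
    unfolding j_def by linarith
  have "{z\<in>V. E x z} = {z\<in>V. E x z \<and> dist y z + 1 = j} \<union> {z\<in>V. E x z \<and> dist y z = j}
      \<union> {z\<in>V. E x z \<and> dist y z = j + 1}"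
    using near by auto
  then have "b 0 = c j + card {z\<in>V. E x z \<and> dist y z = j} + b j"
    using degree[OF x] b c finite_V by (simp add: card_Un_disjoint disjoint_iff)
  then have a: "card {z\<in>V. E x z \<and> dist y z = j} = a j" by simp
  consider "i + 1 = j" | "i = j + 1" | "i = j" | "i + 1 \<noteq> j" "i \<noteq> j + 1" "i \<noteq> j" by blast
  then show ?thesis
  proof cases
    case 1
    then have "{z\<in>V. E x z \<and> dist y z = i} = {z\<in>V. E x z \<and> dist y z + 1 = j}" by auto
    with 1 c show ?thesis unfolding j by simp
  next
    case 2
    with b show ?thesis unfolding j by simp
  next
    case 3
    with a show ?thesis unfolding j by simp
  next
    case 4
    then have none: "{z\<in>V. E x z \<and> dist y z = i} = {}" using near by force
    show ?thesis unfolding none using 4 unfolding j by simp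
  qed
qed

lemma distance_op_recurrence:
  assumes x: "x \<in> V"
  shows "distance_op V E 1 (distance_op V E (Suc i) g) x =
    real (b i) * distance_op V E i g x
    + real (a (Suc i)) * distance_op V E (Suc i) g x
    + real (c (Suc (Suc i))) * distance_op V E (Suc (Suc i)) g x"
proof -
  let ?N = "{z\<in>V. E x z}"
  have "distance_op V E 1 (distance_op V E (Suc i) g) x = (\<Sum>z\<in>?N. distance_op V E (Suc i) g z)"
    unfolding distance_op_def[of _ _ 1] distN_1[OF x] ..
  also have "\<dots> = (\<Sum>z\<in>?N. \<Sum>y\<in>V. if dist y z = Suc i then g y else 0)"
  proof (rule sum.cong[OF refl])
    fix z assume "z \<in> ?N"
    then have "{y\<in>V. dist z y = Suc i} = {y\<in>V. dist y z = Suc i}" using dist_commute by auto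
    then show "distance_op V E (Suc i) g z = (\<Sum>y\<in>V. if dist y z = Suc i then g y else 0)"
      unfolding distance_op_def distN_def using finite_V by (simp add: sum.inter_filter)
  qed
  also have "\<dots> = (\<Sum>y\<in>V. g y * real (card {z\<in>?N. dist y z = Suc i}))"
    by (subst sum.swap) (simp add: sum.inter_filter[symmetric] finite_V mult.commute)
  also have "\<dots> = (\<Sum>y\<in>V. g y * (real (if dist x y = i then b i else 0)
      + real (if dist x y = Suc i then a (Suc i) else 0)
      + real (if dist x y = Suc (Suc i) then c (Suc (Suc i)) else 0)))"
    using card_neighbours_at_dist[OF x] by (intro sum.cong refl) (simp add: conj_ac)
  also have "\<dots> = real (b i) * distance_op V E i g x
    + real (a (Suc i)) * distance_op V E (Suc i) g x
    + real (c (Suc (Suc i))) * distance_op V E (Suc (Suc i)) g x"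
    unfolding distance_op_def distN_def distrib_left sum.distrib
    using finite_V by (simp add: sum_mult_indicator)
  finally show ?thesis .
qed

lemma distN_empty_if_c_eq_0:
  assumes "0 < k" "c k = 0" "x \<in> V"
  shows "distN V E {k} x = {}"
proof (rule ccontr)
  assume "distN V E {k} x \<noteq> {}"
  then obtain y where y: "y \<in> V" "dist x y = k" unfolding distN_def by auto
  then have "k \<le> d" using dist_le_diameter[OF assms(3)] diameter_eq by blast
  then have "card {z\<in>V. E y z \<and> dist x z + 1 = k} = 0"
    using intersection_numbers assms(2,3) y by auto
  moreover obtain z where "z \<in> V" "E y z" "dist x z + 1 = k"
    using dist_Suc_predecessor[OF assms(3) y(1)] y(2) assms(1) by (metis Suc_eq_plus1 Suc_pred)
  ultimately show False using finite_V by auto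
qed

lemma distance_op_eigenvector:
  assumes eig: "\<forall>x\<in>V. distance_op V E 1 g x = \<theta> * g x"
  shows "\<exists>p. \<forall>x\<in>V. distance_op V E i g x = p * g x"
proof -
  let ?eig = "\<lambda>i. \<exists>p. \<forall>x\<in>V. distance_op V E i g x = p * g x"
  have "?eig i \<and> ?eig (Suc i)"
  proof (induction i)
    case 0
    show ?case using distance_op_0 eig by (metis One_nat_def mult_1)
  next
    case (Suc i)
    obtain p0 p1 where p0: "\<forall>x\<in>V. distance_op V E i g x = p0 * g x"
      and p1: "\<forall>x\<in>V. distance_op V E (Suc i) g x = p1 * g x"
      using Suc.IH by blast
    have "?eig (Suc (Suc i))"
    proof (cases "c (Suc (Suc i)) = 0")
      case True
      \<comment> \<open>only possible beyond the diameter, where no vertex is at distance i + 2\<close>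
      then show ?thesis
        using distN_empty_if_c_eq_0[of "Suc (Suc i)"] by (simp add: distance_op_def)
    next
      case False
      define q where "q = p1 * \<theta> - real (b i) * p0 - real (a (Suc i)) * p1"
      have "real (c (Suc (Suc i))) * distance_op V E (Suc (Suc i)) g x = q * g x"
        if x: "x \<in> V" for x
      proof -
        have "distance_op V E 1 (distance_op V E (Suc i) g) x = p1 * distance_op V E 1 g x"
          using p1 by (intro distance_op_scale) blast
        then have "p1 * (\<theta> * g x) = real (b i) * (p0 * g x) + real (a (Suc i)) * (p1 * g x)
            + real (c (Suc (Suc i))) * distance_op V E (Suc (Suc i)) g x"
          using distance_op_recurrence[OF x, of i g] p0 p1 eig x by simp
        then show ?thesis unfolding q_def by (simp add: algebra_simps)
      qed
      then show ?thesis using False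
        by (intro exI[of _ "q / real (c (Suc (Suc i)))"]) (simp add: field_simps)
    qed
    with Suc.IH show ?case by blast
  qed
  then show ?thesis by blast
qed

lemma bipartite_a_mult_distance_op:
  assumes "bipartite V E" "x \<in> V"
  shows "real (a i) * distance_op V E i g x = 0"
proof (cases "distN V E {i} x = {}")
  case False
  then obtain y where y: "y \<in> V" "dist x y = i" unfolding distN_def by auto
  have "dist y z \<noteq> i" if "E x z" for z
    using bipartite_dist_adjacent_neq[OF assms(1) y(1) that] y dist_commute[OF assms(2) y(1)]
    by simp
  then have none: "{z\<in>V. E x z \<and> dist y z = i} = {}" by auto
  have "a i = 0"
    using card_neighbours_at_dist[OF assms(2) y(1), of i] y(2) unfolding none by simp
  then show ?thesis by simp
qed (simp add: distance_op_def)

lemma bipartite_odd_distance_op_eq_0: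
  assumes bip: "bipartite V E" and ker: "\<forall>x\<in>V. distance_op V E 1 g x = 0"
    and "odd i" "x \<in> V"
  shows "distance_op V E i g x = 0"
proof -
  have "\<forall>x\<in>V. distance_op V E (Suc (2 * m)) g x = 0" for m
  proof (induction m)
    case (Suc m)
    have "\<forall>x\<in>V. distance_op V E 1 g x = 0 * g x" using ker by simp
    then obtain p where p: "\<forall>x\<in>V. distance_op V E (Suc (Suc (2 * m))) g x = p * g x"
      using distance_op_eigenvector by blast
    show ?case
    proof
      fix x assume x: "x \<in> V"
      let ?j = "Suc (Suc (2 * m))"
      have "distance_op V E 1 (distance_op V E ?j g) x = p * distance_op V E 1 g x"
        using p by (intro distance_op_scale) blast
      then have "distance_op V E 1 (distance_op V E ?j g) x = 0" using ker x by simp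
      moreover have "real (b (Suc (2 * m))) * distance_op V E (Suc (2 * m)) g x = 0"
        using Suc.IH x by simp
      moreover have "real (a ?j) * distance_op V E ?j g x = 0"
        by (rule bipartite_a_mult_distance_op[OF bip x])
      ultimately have "real (c (Suc ?j)) * distance_op V E (Suc ?j) g x = 0"
        using distance_op_recurrence[OF x, of "Suc (2 * m)" g] by linarith
      then show "distance_op V E (Suc (2 * Suc m)) g x = 0"
        using distN_empty_if_c_eq_0[OF _ _ x, of "Suc (2 * Suc m)"] by (auto simp: distance_op_def)
    qed
  qed (use ker in simp)
  then show ?thesis using assms(3,4) by (metis oddE Suc_eq_plus1)
qed

lemma distance_op_1_one: "x \<in> V \<Longrightarrow> distance_op V E 1 (\<lambda>_. 1) x = real (b 0)"
  using degree unfolding distance_op_def distN_1 by simp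

lemma lweight_split:
  assumes "x \<in> V"
  shows "real (lweight V E D f x) = (\<Sum>i\<in>D \<inter> {..d}.
    distance_op V E i (\<lambda>y. real (f y) - m) x + m * distance_op V E i (\<lambda>_. 1) x)"
proof -
  have "lweight V E D f x = lweight V E (D \<inter> {..d}) f x"
    unfolding lweight_def distN_inter_diameter[OF assms, of D] diameter_eq ..
  then show ?thesis
    using lweight_eq_sum_distance_op[OF finite_V, where E = E and D = "D \<inter> {..d}" and x = x]
      distance_op_add_const[of V E _ "\<lambda>y. real (f y) - m" m x] by simp
qed

lemma distance_magic_centered_in_kernel:
  assumes "distance_magic V E l"
  shows "\<forall>x\<in>V. distance_op V E 1 (\<lambda>y. real (l y) - (real (card V) + 1) / 2) x = 0"
proof -
  define m where "m = (real (card V) + 1) / 2"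
  define v where "v y = real (l y) - m" for y
  obtain k where k: "\<forall>x\<in>V. lweight V E {1} l x = k" and lab: "labeling V l"
    using assms unfolding distance_magic_def D_magic_def by blast
  have const: "distance_op V E 1 v x = real k - m * real (b 0)" if x: "x \<in> V" for x
  proof -
    have "real (lweight V E {1} l x) = distance_op V E 1 (\<lambda>y. real (l y)) x"
      using lweight_eq_sum_distance_op[OF finite_V, where E = E and D = "{1}"] by simp
    then have "real k = distance_op V E 1 (\<lambda>y. v y + m) x"
      using k x unfolding v_def by simp
    then show ?thesis using distance_op_add_const[of V E 1 v m x] distance_op_1_one[OF x] by simp
  qed
  have "(\<Sum>x\<in>V. distance_op V E 1 v x) = real (b 0) * (\<Sum>y\<in>V. v y)"
    unfolding sum_distance_op[of 1 v] using distance_op_1_one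
    by (simp add: sum_distrib_right mult.commute)
  also have "(\<Sum>y\<in>V. v y) = 0"
    using sum_labels[OF lab] unfolding v_def m_def sum_subtractf by (simp add: field_simps)
  finally have "real (card V) * (real k - m * real (b 0)) = 0" using const by simp
  then have "real k - m * real (b 0) = 0" using finite_V V_nonempty by simp
  then show ?thesis using const unfolding v_def m_def by simp
qed

lemma distance_op_constant_one: "\<exists>q. \<forall>i. \<forall>x\<in>V. distance_op V E i (\<lambda>_. 1) x = q i"
proof -
  have "\<forall>x\<in>V. distance_op V E 1 (\<lambda>_. 1) x = real (b 0) * 1"
    using distance_op_1_one by simp
  then have "\<forall>i. \<exists>q. \<forall>x\<in>V. distance_op V E i (\<lambda>_. 1) x = q * 1"
    using distance_op_eigenvector by blast
  from choice[OF this] show ?thesis by simp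
qed

lemma lweight_affine_of_distance_magic:
  assumes "distance_magic V E l"
  shows "\<exists>\<Theta> C. \<forall>x\<in>V. real (lweight V E D l x) = \<Theta> * real (l x) + C"
proof -
  define m where "m = (real (card V) + 1) / 2"
  have "\<forall>x\<in>V. distance_op V E 1 (\<lambda>y. real (l y) - m) x = 0 * (real (l x) - m)"
    using distance_magic_centered_in_kernel[OF assms] unfolding m_def by simp
  then have "\<forall>i. \<exists>p. \<forall>x\<in>V. distance_op V E i (\<lambda>y. real (l y) - m) x = p * (real (l x) - m)"
    using distance_op_eigenvector by blast
  from choice[OF this] obtain p
    where p: "\<forall>i. \<forall>x\<in>V. distance_op V E i (\<lambda>y. real (l y) - m) x = p i * (real (l x) - m)"
    by blast
  obtain q where q: "\<forall>i. \<forall>x\<in>V. distance_op V E i (\<lambda>_. 1) x = q i"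
    using distance_op_constant_one by blast
  define \<Theta> where "\<Theta> = (\<Sum>i\<in>D \<inter> {..d}. p i)"
  define C where "C = m * (\<Sum>i\<in>D \<inter> {..d}. q i) - \<Theta> * m"
  have "real (lweight V E D l x) = \<Theta> * real (l x) + C" if x: "x \<in> V" for x
  proof -
    have "real (lweight V E D l x) = (\<Sum>i\<in>D \<inter> {..d}. p i * (real (l x) - m) + m * q i)"
      using lweight_split[OF x, of D l m] p q x by simp
    also have "\<dots> = \<Theta> * (real (l x) - m) + m * (\<Sum>i\<in>D \<inter> {..d}. q i)"
      unfolding \<Theta>_def by (simp add: sum.distrib sum_distrib_left sum_distrib_right)
    finally show ?thesis unfolding C_def by (simp add: right_diff_distrib)
  qed
  then show ?thesis by blast
qed

lemma D_magic_if_bipartite_odd: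
  assumes "distance_magic V E l" "bipartite V E" "D \<subseteq> {i. odd i}"
  shows "D_magic V E D l"
proof -
  define m where "m = (real (card V) + 1) / 2"
  have lab: "labeling V l" using assms(1) unfolding distance_magic_def D_magic_def by blast
  have odd_vanish: "distance_op V E i (\<lambda>y. real (l y) - m) x = 0" if "i \<in> D" "x \<in> V" for i x
    using bipartite_odd_distance_op_eq_0[OF assms(2) distance_magic_centered_in_kernel[OF assms(1)]]
      assms(3) that unfolding m_def by blast
  obtain q where q: "\<forall>i. \<forall>x\<in>V. distance_op V E i (\<lambda>_. 1) x = q i"
    using distance_op_constant_one by blast
  have "real (lweight V E D l x) = (\<Sum>i\<in>D \<inter> {..d}. m * q i)" if x: "x \<in> V" for x
    using lweight_split[OF x, of D l m] odd_vanish[OF _ x] q x by simp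
  then have "lweight V E D l x = lweight V E D l y" if "x \<in> V" "y \<in> V" for x y
    using that by (metis of_nat_eq_iff)
  then show ?thesis unfolding D_magic_iff_weights_equal[OF lab] by blast
qed

end

theorem theorem2p6:
  fixes V :: "'a set" and E :: "'a \<Rightarrow> 'a \<Rightarrow> bool" and d :: nat and l :: "'a \<Rightarrow> nat"
  assumes "distance_regular V E d"
    and "distance_magic V E l"
  shows "(\<forall>D. D \<noteq> {} \<and> D \<subseteq> {0..d} \<longrightarrow>
            D_magic V E D l \<or> (\<exists>\<alpha> \<delta>. D_antimagic V E D l \<alpha> \<delta>))
       \<and> (bipartite V E \<longrightarrow>
            (\<forall>D. D \<noteq> {} \<and> D \<subseteq> {i. odd i} \<longrightarrow> D_magic V E D l))"
proof -
  obtain b c where "distance_regular_graph V E d b c"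
    using assms(1)
    unfolding distance_regular_def distance_regular_graph_def distance_regular_graph_axioms_def
      conn_graph_def
    by blast
  then interpret distance_regular_graph V E d b c .
  have lab: "labeling V l" using assms(2) unfolding distance_magic_def D_magic_def by blast
  have "D_magic V E D l \<or> (\<exists>\<alpha> \<delta>. D_antimagic V E D l \<alpha> \<delta>)" for D
    using lweight_affine_of_distance_magic[OF assms(2), of D] magic_or_antimagic_if_affine[OF lab]
    by blast
  moreover have "D_magic V E D l" if "bipartite V E" "D \<subseteq> {i. odd i}" for D
    using D_magic_if_bipartite_odd[OF assms(2) that] .
  ultimately show ?thesis by blast
qed

end
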